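(* Let $\mathcal{A}\subset\mathbb{N}$ be an alphabet. If the semigroup $\Gamma_{\mathcal{A}}$ does not have everywhere strong approximation, then there exist an integer $k^{\ast}\ge 2$ and a residue $r \pmod{k^{\ast}}$ such that $\mathcal{A}\subseteq r+k^{\ast}\mathbb{Z}$.
   Context: For $a\in\mathbb{N}$ let $\gamma_a=\begin{pmatrix}0&1\\1&a\end{pmatrix}$. $\mathcal{G}_{\mathcal{A}}\subset \mathrm{GL}_2(\mathbb{Z})$ is the semigroup generated by $\gamma_a$, $a\in\mathcal{A}$, and $\Gamma_{\mathcal{A}}\subset\mathrm{SL}_2(\mathbb{Z})$ is its determinant-one subsemigroup, generated by the products $\gamma_a\gamma_{a'}$, $a,a'\in\mathcal{A}$. $\Gamma_{\mathcal{A}}$ has everywhere strong approximation if for every $q\in\mathbb{N}$ the reduction of $\Gamma_{\mathcal{A}}$ modulo $q$ equals $\mathrm{SL}_2(\mathbb{Z}/q\mathbb{Z})$. *)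

theory Defs
  imports "HOL-Analysis.Analysis" "HOL-Number_Theory.Cong"
begin

type_synonym mat2 = "int ^ 2 ^ 2"

definition mk2 :: "int \<Rightarrow> int \<Rightarrow> int \<Rightarrow> int \<Rightarrow> mat2" where
  "mk2 a b c d = vector [vector [a, b], vector [c, d]]"

definition gamma :: "nat \<Rightarrow> mat2" where
  "gamma a = mk2 0 1 1 (int a)"

inductive_set G_semigroup :: "nat set \<Rightarrow> mat2 set" for A where
  gen: "a \<in> A \<Longrightarrow> gamma a \<in> G_semigroup A"
| mult: "M \<in> G_semigroup A \<Longrightarrow> N \<in> G_semigroup A \<Longrightarrow> M ** N \<in> G_semigroup A"

definition Gamma_semigroup :: "nat set \<Rightarrow> mat2 set" where
  "Gamma_semigroup A = {M \<in> G_semigroup A. det M = 1}"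

definition mat_cong :: "int \<Rightarrow> mat2 \<Rightarrow> mat2 \<Rightarrow> bool" where
  "mat_cong q M N \<longleftrightarrow> (\<forall>i j. [M $ i $ j = N $ i $ j] (mod q))"

text \<open>Reduction mod q of S equals SL_2(Z/qZ): every integer matrix whose determinant is
  1 mod q (i.e. every lift of an element of SL_2(Z/qZ)) is congruent mod q to an element of S,
  and every element of S reduces into SL_2(Z/qZ).\<close>
definition surj_mod :: "mat2 set \<Rightarrow> int \<Rightarrow> bool" where
  "surj_mod S q \<longleftrightarrow> (\<forall>M. [det M = 1] (mod q) \<longrightarrow> (\<exists>N\<in>S. mat_cong q M N))
                      \<and> (\<forall>N\<in>S. [det N = 1] (mod q))"

definition everywhere_strong_approx :: "mat2 set \<Rightarrow> bool" where
  "everywhere_strong_approx S \<longleftrightarrow> (\<forall>q::nat. q \<ge> 1 \<longrightarrow> surj_mod S (int q))"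

end

theory Submission
  imports Defs
begin

text \<open>Modulo q the matrix gamma b has finite order, so some odd power of gamma b lies in G_A
  and is congruent to the inverse of gamma b; multiplying it by gamma a on either side gives
  elements of Gamma_A congruent to the elementary matrices E21 (a - b) and E12 (a - b). The set of
  t for which both E12 t and E21 t are represented modulo q in Gamma_A is closed under addition
  and under congruence modulo q, hence equals g\<int> for some g \<ge> 1. As g divides every difference
  a - b of letters, g = 1 unless A lies in one residue class modulo g \<ge> 2. Finally the elementary
  matrices generate SL_2(\<int>/q\<int>), by the Euclidean algorithm on the first column.\<close>

lemma mk2_nth [simp]:
  "mk2 a b c d $ 1 $ 1 = a" "mk2 a b c d $ 1 $ 2 = b"
  "mk2 a b c d $ 2 $ 1 = c" "mk2 a b c d $ 2 $ 2 = d"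
  by (simp_all add: mk2_def)

lemma mk2_eta: "M = mk2 (M$1$1) (M$1$2) (M$2$1) (M$2$2)"
  by (simp add: vec_eq_iff forall_2)

lemma mk2_mult [simp]:
  "mk2 a b c d ** mk2 e f g h = mk2 (a*e + b*g) (a*f + b*h) (c*e + d*g) (c*f + d*h)"
  by (simp add: vec_eq_iff forall_2 matrix_matrix_mult_def sum_2)

lemma det_mk2 [simp]: "det (mk2 a b c d) = a*d - b*c"
  by (simp add: det_2)

lemma mat_one_eq_mk2: "(mat 1 :: mat2) = mk2 1 0 0 1"
  by (simp add: vec_eq_iff forall_2 mat_def)

abbreviation E12 :: "int \<Rightarrow> mat2" where
  "E12 t \<equiv> mk2 1 t 0 1"

abbreviation E21 :: "int \<Rightarrow> mat2" where
  "E21 t \<equiv> mk2 1 0 t 1"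

lemma mat_cong_mk2:
  "mat_cong q (mk2 a b c d) (mk2 e f g h) \<longleftrightarrow>
    [a = e] (mod q) \<and> [b = f] (mod q) \<and> [c = g] (mod q) \<and> [d = h] (mod q)"
  by (simp add: mat_cong_def forall_2)

lemma mat_cong_refl: "mat_cong q M M"
  by (simp add: mat_cong_def)

lemma mat_cong_sym: "mat_cong q M N \<Longrightarrow> mat_cong q N M"
  by (simp add: mat_cong_def cong_sym)

lemma mat_cong_trans: "mat_cong q M N \<Longrightarrow> mat_cong q N K \<Longrightarrow> mat_cong q M K"
  unfolding mat_cong_def using cong_trans by blast

lemma mat_cong_mult:
  assumes "mat_cong q X Y" "mat_cong q Z W"
  shows "mat_cong q (X ** Z) (Y ** W)"
proof -
  have "mat_cong q (mk2 (X$1$1) (X$1$2) (X$2$1) (X$2$2) ** mk2 (Z$1$1) (Z$1$2) (Z$2$1) (Z$2$2))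
     (mk2 (Y$1$1) (Y$1$2) (Y$2$1) (Y$2$2) ** mk2 (W$1$1) (W$1$2) (W$2$1) (W$2$2))"
    using assms unfolding mk2_mult mat_cong_mk2 unfolding mat_cong_def
    by (intro conjI cong_add cong_mult) auto
  then show ?thesis
    using mk2_eta[of X] mk2_eta[of Y] mk2_eta[of Z] mk2_eta[of W] by simp
qed

lemma cong_if_diff_eq_mult:
  fixes q u :: int
  assumes "x - y = u * w" and "q dvd u"
  shows "[x = y] (mod q)"
  using assms by (simp add: cong_iff_dvd_diff)

definition cong_closure :: "int \<Rightarrow> mat2 set \<Rightarrow> mat2 set" where
  "cong_closure q S = {X. \<exists>N\<in>S. mat_cong q X N}"

lemma cong_closure_mult:
  assumes "\<And>M N. M \<in> S \<Longrightarrow> N \<in> S \<Longrightarrow> M ** N \<in> S"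
    and "X \<in> cong_closure q S" "Y \<in> cong_closure q S"
  shows "X ** Y \<in> cong_closure q S"
  using assms mat_cong_mult unfolding cong_closure_def by blast

lemma cong_closure_cong:
  "X \<in> cong_closure q S \<Longrightarrow> mat_cong q Y X \<Longrightarrow> Y \<in> cong_closure q S"
  using mat_cong_trans unfolding cong_closure_def by blast

subsection \<open>Elementary matrices generate SL_2(\<int>/q\<int>)\<close>

lemma mk2_eq_E12_weyl_mult:
  "mk2 (s*c + r) b c d = E12 s ** (E12 1 ** E21 (-1) ** E12 1) ** mk2 (-c) (-d) r (b - s*d)"
  by (simp add: algebra_simps)

text \<open>As d inverts a modulo q, the first four factors multiply to diag a d modulo q.\<close>

lemma upper_triangular_cong_elementary_product:
  assumes "[a * d = 1] (mod q)"
  shows "mat_cong q (mk2 a b 0 d)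
    (E12 a ** E21 (-d) ** E12 a ** (E12 (-1) ** E21 1 ** E12 (-1)) ** E12 (b*d))"
proof -
  have u: "q dvd a*d - 1"
    using assms by (simp add: cong_iff_dvd_diff)
  have "E12 a ** E21 (-d) ** E12 a ** (E12 (-1) ** E21 1 ** E12 (-1)) ** E12 (b*d) =
      mk2 (a * (2 - a*d)) (a * (2 - a*d) * b * d + a*d - 1) (1 - a*d) ((1 - a*d) * b * d + d)"
    by (simp add: algebra_simps)
  moreover have "[a = a * (2 - a*d)] (mod q)"
    by (rule cong_if_diff_eq_mult[OF _ u, where w = a]) (simp add: algebra_simps)
  moreover have "[b = a * (2 - a*d) * b * d + a*d - 1] (mod q)"
    by (rule cong_if_diff_eq_mult[OF _ u, where w = "(a*d - 1) * b - 1"]) (simp add: algebra_simps)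
  moreover have "[0 = 1 - a*d] (mod q)"
    by (rule cong_if_diff_eq_mult[OF _ u, where w = 1]) simp
  moreover have "[d = (1 - a*d) * b * d + d] (mod q)"
    by (rule cong_if_diff_eq_mult[OF _ u, where w = "b * d"]) (simp add: algebra_simps)
  ultimately show ?thesis
    by (simp only: mat_cong_mk2)
qed

lemma det_cong_one_mem_elementary_closure:
  fixes S :: "mat2 set"
  assumes mult: "\<And>X Y. X \<in> S \<Longrightarrow> Y \<in> S \<Longrightarrow> X ** Y \<in> S"
    and cong: "\<And>X Y. X \<in> S \<Longrightarrow> mat_cong q Y X \<Longrightarrow> Y \<in> S"
    and E12: "\<And>t. E12 t \<in> S" and E21: "\<And>t. E21 t \<in> S"
  shows "[det M = 1] (mod q) \<Longrightarrow> M \<in> S"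
proof (induction "nat \<bar>M$2$1\<bar>" arbitrary: M rule: less_induct)
  case less
  obtain a b c d where M: "M = mk2 a b c d"
    by (rule that[OF mk2_eta])
  show ?case
  proof (cases "c = 0")
    case True
    then have "[a * d = 1] (mod q)"
      using less.prems M by simp
    from upper_triangular_cong_elementary_product[OF this, of b] show ?thesis
      unfolding M True by (rule cong[rotated]) (simp only: mult E12 E21)
  next
    case False
    define s r where "s = a div c" and "r = a mod c"
    have a: "a = s*c + r"
      by (simp add: s_def r_def)
    define M' where "M' = mk2 (-c) (-d) r (b - s*d)"
    have "nat \<bar>M'$2$1\<bar> < nat \<bar>M$2$1\<bar>"
      using abs_mod_less[OF False, of a] by (simp add: M'_def M r_def)
    moreover have "det M' = det M"
      by (simp add: M'_def M a algebra_simps)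
    ultimately have "M' \<in> S"
      using less by simp
    then have "E12 s ** (E12 1 ** E21 (-1) ** E12 1) ** M' \<in> S"
      by (simp only: mult E12 E21)
    then show ?thesis
      unfolding M a M'_def mk2_eq_E12_weyl_mult .
  qed
qed

subsection \<open>Inverting a generator modulo q\<close>

fun mat_pow :: "mat2 \<Rightarrow> nat \<Rightarrow> mat2" where
  "mat_pow M 0 = mat 1"
| "mat_pow M (Suc n) = M ** mat_pow M n"

lemma mat_pow_add: "mat_pow M (m + n) = mat_pow M m ** mat_pow M n"
  by (induction m) (simp_all add: matrix_mul_assoc)

lemma mat_pow_Suc': "mat_pow M (Suc n) = mat_pow M n ** M"
  using mat_pow_add[of M n 1] by simp

lemma det_mat_pow: "det (mat_pow M n) = det M ^ n"
  by (induction n) (simp_all add: det_mul det_I)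

lemma mat_pow_mult_mat_pow_inverse:
  assumes "G ** H = mat 1"
  shows "mat_pow G n ** mat_pow H n = mat 1"
proof (induction n)
  case (Suc n)
  have "mat_pow G (Suc n) ** mat_pow H (Suc n) = G ** (mat_pow G n ** mat_pow H n) ** H"
    by (subst mat_pow_Suc'[of H n]) (simp add: matrix_mul_assoc)
  then show ?case
    using Suc assms by simp
qed simp

lemma mat_pow_cong_one:
  assumes q: "q \<ge> 1" and GH: "G ** H = mat 1"
  shows "\<exists>m\<ge>1. mat_cong q (mat_pow G m) (mat 1)"
proof -
  define f where "f n = (mat_pow G n $1$1 mod q, mat_pow G n $1$2 mod q,
    mat_pow G n $2$1 mod q, mat_pow G n $2$2 mod q)" for n
  have "range f \<subseteq> {0..<q} \<times> {0..<q} \<times> {0..<q} \<times> {0..<q}"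
    using q by (auto simp: f_def)
  then have "\<not> inj f"
    using finite_subset finite_imageD infinite_UNIV_nat by blast
  then obtain i j where ij: "i < j" "f i = f j"
    unfolding inj_def by (metis linorder_neq_iff)
  then have "mat_cong q (mat_pow G i) (mat_pow G j)"
    by (simp add: f_def mat_cong_def forall_2 cong_def)
  then have "mat_cong q (mat_pow G i ** mat_pow H i) (mat_pow G j ** mat_pow H i)"
    by (rule mat_cong_mult[OF _ mat_cong_refl])
  moreover have "mat_pow G j ** mat_pow H i = mat_pow G (j - i)"
    using mat_pow_add[of G "j - i" i] mat_pow_mult_mat_pow_inverse[OF GH, of i] ij(1)
    by (simp flip: matrix_mul_assoc)
  ultimately have "mat_cong q (mat_pow G (j - i)) (mat 1)"
    using mat_pow_mult_mat_pow_inverse[OF GH, of i] mat_cong_sym by simp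
  then show ?thesis
    using ij(1) by (intro exI[of _ "j - i"]) simp
qed

lemma gamma_mult_inverse: "gamma b ** mk2 (- int b) 1 1 0 = mat 1"
  by (simp add: gamma_def mat_one_eq_mk2)

lemma det_gamma: "det (gamma a) = -1"
  by (simp add: gamma_def)

lemma gamma_odd_pow_cong_inverse:
  assumes "q \<ge> 1"
  shows "\<exists>n. odd n \<and> mat_cong q (mat_pow (gamma b) n) (mk2 (- int b) 1 1 0)"
proof -
  let ?g = "gamma b" and ?h = "mk2 (- int b) 1 1 0"
  obtain m where m: "m \<ge> 1" "mat_cong q (mat_pow ?g m) (mat 1)"
    using mat_pow_cong_one[OF assms gamma_mult_inverse] by blast
  define n where "n = 2*m - 1"
  have "mat_pow ?g n = mat_pow ?g (Suc n) ** ?h"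
    unfolding mat_pow_Suc' by (simp add: gamma_mult_inverse flip: matrix_mul_assoc)
  also have "mat_pow ?g (Suc n) = mat_pow ?g m ** mat_pow ?g m"
    using m(1) by (simp add: n_def mult_2 flip: mat_pow_add)
  finally have "mat_cong q (mat_pow ?g n) (mat 1 ** mat 1 ** ?h)"
    using m(2) by (simp only: mat_cong_mult mat_cong_refl)
  then have "mat_cong q (mat_pow ?g n) ?h"
    by simp
  moreover have "odd n"
    using m(1) by (simp add: n_def)
  ultimately show ?thesis
    by auto
qed

lemma mat_pow_gamma_mem_G_semigroup:
  "a \<in> A \<Longrightarrow> 0 < n \<Longrightarrow> mat_pow (gamma a) n \<in> G_semigroup A"
proof (induction n)
  case (Suc n)
  then show ?case
    by (cases n) (auto intro: G_semigroup.intros)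
qed simp

lemma Gamma_semigroup_mult:
  "M \<in> Gamma_semigroup A \<Longrightarrow> N \<in> Gamma_semigroup A \<Longrightarrow> M ** N \<in> Gamma_semigroup A"
  by (auto simp: Gamma_semigroup_def det_mul intro: G_semigroup.mult)

lemma elementary_diff_mem_cong_closure:
  assumes q: "q \<ge> 1" and a: "a \<in> A" and b: "b \<in> A"
  shows "E21 (int a - int b) \<in> cong_closure q (Gamma_semigroup A)"
    and "E12 (int a - int b) \<in> cong_closure q (Gamma_semigroup A)"
proof -
  obtain n where n: "odd n" "mat_cong q (mat_pow (gamma b) n) (mk2 (- int b) 1 1 0)"
    using gamma_odd_pow_cong_inverse[OF q] by blast
  have "mat_pow (gamma b) n \<in> G_semigroup A"
    using n(1) by (intro mat_pow_gamma_mem_G_semigroup[OF b]) (simp add: odd_pos)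
  moreover have "det (mat_pow (gamma b) n) = -1"
    using n(1) by (simp add: det_mat_pow det_gamma)
  ultimately have "gamma a ** mat_pow (gamma b) n \<in> Gamma_semigroup A"
    and "mat_pow (gamma b) n ** gamma a \<in> Gamma_semigroup A"
    using a by (auto simp: Gamma_semigroup_def det_mul det_gamma intro: G_semigroup.intros)
  moreover have "mat_cong q (E21 (int a - int b)) (gamma a ** mat_pow (gamma b) n)"
    and "mat_cong q (E12 (int a - int b)) (mat_pow (gamma b) n ** gamma a)"
    using mat_cong_mult[OF mat_cong_refl n(2), of "gamma a"]
      mat_cong_mult[OF n(2) mat_cong_refl, of "gamma a"]
    by (simp_all add: gamma_def mat_cong_sym)
  ultimately show "E21 (int a - int b) \<in> cong_closure q (Gamma_semigroup A)"
    and "E12 (int a - int b) \<in> cong_closure q (Gamma_semigroup A)"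
    unfolding cong_closure_def by blast+
qed

subsection \<open>Additive subgroups of \<int> containing q\<int>\<close>

lemma add_cong_closed_mult:
  fixes S :: "int set" and q :: int
  assumes q: "q \<ge> 1"
    and add: "\<And>x y. x \<in> S \<Longrightarrow> y \<in> S \<Longrightarrow> x + y \<in> S"
    and cong: "\<And>x y. x \<in> S \<Longrightarrow> [y = x] (mod q) \<Longrightarrow> y \<in> S"
    and x: "x \<in> S"
  shows "z * x \<in> S"
proof -
  have pos: "int (Suc n) * y \<in> S" if "y \<in> S" for n y
  proof (induction n)
    case (Suc n)
    have "int (Suc (Suc n)) * y = y + int (Suc n) * y"
      by (simp add: algebra_simps)
    then show ?case
      using add[OF that Suc] by (simp only:)
  qed (use that in simp)
  \<comment> \<open>Additive inverses come from (2q - 1) x \<equiv> -x.\<close>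
  have "[- x = int (Suc (nat (2*q - 2))) * x] (mod q)"
    using q by (intro cong_if_diff_eq_mult[where u = q and w = "-2 * x"]) (simp_all add: algebra_simps)
  then have neg: "- x \<in> S"
    using cong pos[OF x] by blast
  consider "z > 0" | "z = 0" | "z < 0" by linarith
  then show ?thesis
  proof cases
    case 1
    then show ?thesis using pos[OF x, of "nat z - 1"] by simp
  next
    case 2
    then show ?thesis using add[OF x neg] by simp
  next
    case 3
    then show ?thesis using pos[OF neg, of "nat (-z) - 1"] by simp
  qed
qed

lemma add_mult_closed_eq_multiples:
  fixes S :: "int set"
  assumes add: "\<And>x y. x \<in> S \<Longrightarrow> y \<in> S \<Longrightarrow> x + y \<in> S"
    and mult: "\<And>z y. y \<in> S \<Longrightarrow> z * y \<in> S"
    and "p > 0" "p \<in> S"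
  shows "\<exists>g>0. S = {x. g dvd x}"
proof -
  define g where "g = (LEAST n::nat. 0 < n \<and> int n \<in> S)"
  have "0 < nat p \<and> int (nat p) \<in> S"
    using \<open>p > 0\<close> \<open>p \<in> S\<close> by simp
  then have "0 < g \<and> int g \<in> S"
    unfolding g_def by (rule LeastI)
  then have g: "0 < g" "int g \<in> S"
    by auto
  have g_min: "\<not> (0 < n \<and> int n \<in> S)" if "n < g" for n
    by (rule not_less_Least[OF that[unfolded g_def]])
  have g_dvd: "int g dvd y" if "y \<in> S" for y
  proof -
    have "y + (- (y div int g)) * int g \<in> S"
      using add[OF that mult[OF g(2)]] .
    then have mod_mem: "int (nat (y mod int g)) \<in> S"
      using g(1) by (simp add: minus_div_mult_eq_mod)
    have "nat (y mod int g) < g"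
      using g(1) by (simp add: nat_less_iff)
    then have "\<not> (0 < nat (y mod int g) \<and> int (nat (y mod int g)) \<in> S)"
      by (rule g_min)
    with mod_mem have "\<not> 0 < nat (y mod int g)"
      by (simp only: simp_thms)
    then have "y mod int g = 0"
      using pos_mod_sign[of "int g" y] g(1) by linarith
    then show ?thesis
      by (simp add: dvd_eq_mod_eq_0)
  qed
  have "S = {y. int g dvd y}"
  proof (intro set_eqI iffI)
    fix y
    assume "y \<in> {y. int g dvd y}"
    then obtain k where "y = int g * k"
      by blast
    then show "y \<in> S"
      using mult[OF g(2), of k] by (simp only: mult.commute)
  qed (use g_dvd in simp)
  then show ?thesis
    using g(1) by (intro exI[of _ "int g"]) simp
qed

lemma add_cong_closed_eq_multiples:
  fixes S :: "int set" and q :: int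
  assumes q: "q \<ge> 1"
    and add: "\<And>x y. x \<in> S \<Longrightarrow> y \<in> S \<Longrightarrow> x + y \<in> S"
    and cong: "\<And>x y. x \<in> S \<Longrightarrow> [y = x] (mod q) \<Longrightarrow> y \<in> S"
    and "S \<noteq> {}"
  shows "\<exists>g>0. S = {x. g dvd x}"
proof -
  have mult: "z * y \<in> S" if "y \<in> S" for z y
    using add_cong_closed_mult[OF q add cong that] .
  obtain x where "x \<in> S"
    using \<open>S \<noteq> {}\<close> by blast
  then have "q \<in> S"
    using cong[OF mult[OF \<open>x \<in> S\<close>, of 0], of q] by (simp add: cong_0_iff)
  with add mult show ?thesis
    using q by (intro add_mult_closed_eq_multiples[of S q]) auto
qed

lemma no_common_residue_nonempty:
  assumes "\<not> (\<exists>(k::int) r. k \<ge> 2 \<and> (\<forall>a\<in>A. [int a = r] (mod k)))"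
  shows "A \<noteq> {}"
proof
  assume "A = {}"
  then have "\<exists>(k::int) r. k \<ge> 2 \<and> (\<forall>a\<in>A. [int a = r] (mod k))"
    by (intro exI[of _ 2]) simp
  with assms show False ..
qed

lemma no_common_residue_dvd_diff:
  assumes "\<not> (\<exists>(k::int) r. k \<ge> 2 \<and> (\<forall>a\<in>A. [int a = r] (mod k)))"
    and "g > 0" and "a0 \<in> A" and "\<And>a. a \<in> A \<Longrightarrow> g dvd int a - int a0"
  shows "g = 1"
proof (rule ccontr)
  assume "g \<noteq> 1"
  with \<open>g > 0\<close> have "g \<ge> 2"
    by simp
  moreover have "\<forall>a\<in>A. [int a = int a0] (mod g)"
    using assms(4) by (simp add: cong_iff_dvd_diff)
  ultimately have "\<exists>(k::int) r. k \<ge> 2 \<and> (\<forall>a\<in>A. [int a = r] (mod k))"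
    by blast
  with assms(1) show False ..
qed

lemma elementary_mem_cong_closure:
  fixes A :: "nat set" and q :: int
  assumes no_residue: "\<not> (\<exists>(k::int) r. k \<ge> 2 \<and> (\<forall>a\<in>A. [int a = r] (mod k)))"
    and q: "q \<ge> 1"
  shows "E12 t \<in> cong_closure q (Gamma_semigroup A) \<and> E21 t \<in> cong_closure q (Gamma_semigroup A)"
proof -
  let ?R = "cong_closure q (Gamma_semigroup A)"
  define S where "S = {t. E12 t \<in> ?R \<and> E21 t \<in> ?R}"
  obtain a0 where a0: "a0 \<in> A"
    using no_common_residue_nonempty[OF no_residue] by blast
  have S_diff: "int a - int b \<in> S" if "a \<in> A" "b \<in> A" for a b
    using elementary_diff_mem_cong_closure[OF q that] unfolding S_def by blast
  have S_add: "x + y \<in> S" if "x \<in> S" "y \<in> S" for x y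
  proof -
    from that have "E12 x ** E12 y \<in> ?R" "E21 x ** E21 y \<in> ?R"
      unfolding S_def by (auto intro!: cong_closure_mult Gamma_semigroup_mult simp del: mk2_mult)
    then show ?thesis
      unfolding S_def by (simp add: add.commute)
  qed
  have S_cong: "y \<in> S" if "x \<in> S" "[y = x] (mod q)" for x y
  proof -
    have "mat_cong q (E12 y) (E12 x)" "mat_cong q (E21 y) (E21 x)"
      using that(2) by (simp_all add: mat_cong_mk2)
    with that(1) show ?thesis
      unfolding S_def by (blast intro: cong_closure_cong)
  qed
  have "S \<noteq> {}"
    using S_diff[OF a0 a0] by blast
  with q S_add S_cong have "\<exists>g>0. S = {x. g dvd x}"
    by (rule add_cong_closed_eq_multiples)
  then obtain g where g: "g > 0" "S = {x. g dvd x}"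
    by blast
  have "g = 1"
    using no_common_residue_dvd_diff[OF no_residue g(1) a0] S_diff[OF _ a0] g(2) by simp
  then have "t \<in> S"
    using g(2) by simp
  then show ?thesis
    unfolding S_def by simp
qed

lemma surj_mod_Gamma_semigroup:
  fixes A :: "nat set" and q :: int
  assumes "\<not> (\<exists>(k::int) r. k \<ge> 2 \<and> (\<forall>a\<in>A. [int a = r] (mod k)))"
    and "q \<ge> 1"
  shows "surj_mod (Gamma_semigroup A) q"
proof -
  have "M \<in> cong_closure q (Gamma_semigroup A)" if "[det M = 1] (mod q)" for M
  proof (rule det_cong_one_mem_elementary_closure[OF _ _ _ _ that])
    show "X ** Y \<in> cong_closure q (Gamma_semigroup A)"
      if "X \<in> cong_closure q (Gamma_semigroup A)" "Y \<in> cong_closure q (Gamma_semigroup A)" for X Y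
      using Gamma_semigroup_mult that by (rule cong_closure_mult)
  qed (use cong_closure_cong elementary_mem_cong_closure[OF assms] in blast)+
  then show ?thesis
    unfolding surj_mod_def cong_closure_def by (simp add: Gamma_semigroup_def)
qed

theorem theoremB1:
  fixes A :: "nat set"
  assumes "0 \<notin> A"
    and "\<not> everywhere_strong_approx (Gamma_semigroup A)"
  shows "\<exists>(k::int) r. k \<ge> 2 \<and> (\<forall>a\<in>A. [int a = r] (mod k))"
proof (rule ccontr)
  assume "\<not> ?thesis"
  then have "everywhere_strong_approx (Gamma_semigroup A)"
    unfolding everywhere_strong_approx_def using surj_mod_Gamma_semigroup by simp
  with assms(2) show False ..
qed

end
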